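(* Let $A\in\mathbb{R}^{n\times n}$ and $b\in\mathbb{R}^n$, and consider the generalized Newton method $x^{k+1}=(A-D(x^k))^{-1}b$ for the equation $Ax-|x|=b$. (a) If $A-I$ is a nonsingular $M$-matrix, then for every $x^0\in\mathbb{R}^n$ the iteration is well defined for all $k$, the equation has a unique solution $x^*$, and $x^k=x^*$ for all $k\ge n+2$. (b) If $A-I$ is an irreducible singular $M$-matrix, $v>0$ is a vector with $(A^T-I)v=0$, and $v^Tb<0$, then for every $x^0$ with $D(x^0)\neq I$ (i.e. $x^0$ has at least one nonpositive component) the iteration is well defined for all $k$, the equation has a unique solution $x^*$, and $x^k=x^*$ for all $k\ge n+1$.
   Context: For $x\in\mathbb{R}^n$, $|x|$ is the componentwise absolute value, $\mathrm{sign}(x)$ is the vector whose components are $1,0,-1$ according as the corresponding component of $x$ is positive, zero, negative, and $D(x)=\mathrm{diag}(\mathrm{sign}(x))$. A $Z$-matrix is a real square matrix whose off-diagonal entries are all nonpositive; any $Z$-matrix can be written $sI-B$ with $B\ge 0$ entrywise, and it is a nonsingular $M$-matrix if $s>\rho(B)$ and a singular $M$-matrix if $s=\rho(B)$, where $\rho$ is spectral radius. A square matrix $M$ is reducible if there is a permutation matrix $P$ with $P^TMP=\begin{bmatrix}M_{11}&M_{12}\\0&M_{22}\end{bmatrix}$ where $M_{11},M_{22}$ are square (nonempty) blocks; it is irreducible otherwise. If $A-I$ is an irreducible singular $M$-matrix, a vector $v>0$ with $(A^T-I)v=0$ exists and is unique up to a positive scalar multiple. *)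

theory Defs
  imports "HOL-Analysis.Analysis"
begin

definition vabs :: "real ^ 'n \<Rightarrow> real ^ 'n" where
  "vabs x = (\<chi> i. \<bar>x $ i\<bar>)"

definition vsign :: "real ^ 'n \<Rightarrow> real ^ 'n" where
  "vsign x = (\<chi> i. sgn (x $ i))"

definition Dmat :: "real ^ 'n \<Rightarrow> real ^ 'n ^ 'n" where
  "Dmat x = (\<chi> i j. if i = j then vsign x $ i else 0)"

definition spectral_radius :: "real ^ 'n ^ 'n \<Rightarrow> real" where
  "spectral_radius B =
     Max {cmod l | l. \<exists>v :: complex ^ 'n. v \<noteq> 0 \<and>
            (\<chi> i j. complex_of_real (B $ i $ j)) *v v = l *s v}"

definition nonneg_matrix :: "real ^ 'n ^ 'n \<Rightarrow> bool" where
  "nonneg_matrix B \<longleftrightarrow> (\<forall>i j. B $ i $ j \<ge> 0)"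

definition nonsingular_M_matrix :: "real ^ 'n ^ 'n \<Rightarrow> bool" where
  "nonsingular_M_matrix M \<longleftrightarrow>
     (\<exists>s B. nonneg_matrix B \<and> M = s *\<^sub>R mat 1 - B \<and> s > spectral_radius B)"

definition singular_M_matrix :: "real ^ 'n ^ 'n \<Rightarrow> bool" where
  "singular_M_matrix M \<longleftrightarrow>
     (\<exists>s B. nonneg_matrix B \<and> M = s *\<^sub>R mat 1 - B \<and> s = spectral_radius B)"

text \<open>Reducibility: after a simultaneous permutation of rows and columns the matrix
  has the block form [[M11, M12],[0, M22]] with square nonempty diagonal blocks.\<close>
definition reducible :: "'a::zero ^ 'n ^ 'n \<Rightarrow> bool" where
  "reducible M \<longleftrightarrow>
     (\<exists>I J. I \<noteq> {} \<and> J \<noteq> {} \<and> I \<inter> J = {} \<and> I \<union> J = UNIV \<and>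
        (\<forall>j\<in>J. \<forall>i\<in>I. M $ j $ i = 0))"

definition irreducible_mat :: "'a::zero ^ 'n ^ 'n \<Rightarrow> bool" where
  "irreducible_mat M \<longleftrightarrow> \<not> reducible M"

primrec gn_iter :: "real ^ 'n ^ 'n \<Rightarrow> real ^ 'n \<Rightarrow> real ^ 'n \<Rightarrow> nat \<Rightarrow> real ^ 'n" where
  "gn_iter A b x0 0 = x0"
| "gn_iter A b x0 (Suc k) = matrix_inv (A - Dmat (gn_iter A b x0 k)) *v b"

end

theory Submission
  imports Defs "HOL-Computational_Algebra.Polynomial"
begin

text \<open>
  Write \<open>A - I = sI - B\<close> with \<open>B \<ge> 0\<close>. Every Newton matrix \<open>A - D(w)\<close> that occurs is
  monotone (\<open>(A - D(w))z \<ge> 0\<close> implies \<open>z \<ge> 0\<close>): otherwise the negative part \<open>y\<close> of \<open>z\<close>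
  satisfies \<open>sy \<le> By\<close>. In case (a) this contradicts \<open>s > \<rho>(B)\<close> by the Collatz--Wielandt
  bound, obtained from Brouwer's fixed point theorem. In case (b) pairing with the positive left
  null vector \<open>v\<close> forces \<open>By = sy\<close>, irreducibility forces \<open>y > 0\<close>, and then \<open>z < 0\<close> contradicts
  \<open>w\<close> having a nonpositive component; \<open>v\<^sup>Tb < 0\<close> guarantees that every iterate has a negative
  component.

  Monotonicity makes the iteration well defined, the solution unique, and the iterates
  nondecreasing from \<open>x\<^sup>1\<close> on. Until a solution is reached, the set of positive components of
  the iterates grows strictly at each step, and it has at most \<open>n\<close> (in case (b) \<open>n - 1\<close>)
  elements.
\<close>

section \<open>Eigenvalues and the spectral radius\<close>

lemma matrix_vector_mult_mat: "mat l *v v = l *s (v :: 'a::semiring_1 ^ 'n)"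
  by (simp add: vec_eq_iff matrix_vector_mult_def mat_def if_distrib[of "\<lambda>a. a * _"] cong: if_cong)

lemma eigenvalue_norm_le_entry_sum:
  fixes C :: "complex ^ 'n ^ 'n"
  assumes "v \<noteq> 0" and "C *v v = l *s v"
  shows "cmod l \<le> (\<Sum>i\<in>UNIV. \<Sum>j\<in>UNIV. cmod (C $ i $ j))"
proof -
  have "Max (range (\<lambda>j. cmod (v $ j))) \<in> range (\<lambda>j. cmod (v $ j))"
    by (rule Max_in) auto
  then obtain i where "cmod (v $ i) = Max (range (\<lambda>j. cmod (v $ j)))"
    by (metis imageE)
  then have imax: "cmod (v $ j) \<le> cmod (v $ i)" for j
    by simp
  have "v $ i \<noteq> 0"
  proof
    assume "v $ i = 0"
    then have "v $ j = 0" for j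
      using imax[of j] by simp
    then show False
      using \<open>v \<noteq> 0\<close> by (simp add: vec_eq_iff)
  qed
  have "cmod l * cmod (v $ i) = cmod (\<Sum>j\<in>UNIV. C $ i $ j * v $ j)"
    using arg_cong[OF assms(2), of "\<lambda>u. u $ i"] by (simp add: matrix_vector_mult_def norm_mult)
  also have "\<dots> \<le> (\<Sum>j\<in>UNIV. cmod (C $ i $ j) * cmod (v $ i))"
    by (rule order_trans[OF norm_sum sum_mono]) (simp add: norm_mult imax mult_left_mono)
  also have "\<dots> \<le> (\<Sum>i\<in>UNIV. \<Sum>j\<in>UNIV. cmod (C $ i $ j)) * cmod (v $ i)"
    by (auto simp: sum_distrib_right[symmetric] intro!: mult_right_mono member_le_sum sum_nonneg)
  finally show ?thesis
    using \<open>v $ i \<noteq> 0\<close> by simp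
qed

lemma eigenvector_iff_kernel:
  "C *v v = l *s v \<longleftrightarrow> (C - mat l) *v v = (0 :: 'a::ring_1 ^ 'n)"
  by (simp add: matrix_vector_mult_diff_rdistrib matrix_vector_mult_mat)

lemma finite_eigenvalues:
  fixes C :: "complex ^ 'n ^ 'n"
  shows "finite {l. \<exists>v. v \<noteq> 0 \<and> C *v v = l *s v}"
proof -
  define P :: "complex poly ^ 'n ^ 'n" where "P = (\<chi> i j. [:C $ i $ j:]) - mat [:0, 1:]"
  have poly_det_P: "poly (det P) l = det (C - mat l)" for l
  proof -
    have "poly (P $ i $ j) l = (C - mat l) $ i $ j" for i j
      by (simp add: P_def mat_def)
    then show ?thesis
      unfolding det_def poly_sum poly_mult poly_prod poly_of_int by simp
  qed
  have eigenvalue_iff: "(\<exists>v. v \<noteq> 0 \<and> C *v v = l *s v) \<longleftrightarrow> poly (det P) l = 0" for l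
  proof -
    have "(\<exists>v. v \<noteq> 0 \<and> C *v v = l *s v) \<longleftrightarrow> \<not> invertible (C - mat l)"
      unfolding eigenvector_iff_kernel invertible_left_inverse matrix_left_invertible_ker by blast
    then show ?thesis
      by (simp add: poly_det_P invertible_det_nz)
  qed
  define S where "S = (\<Sum>i\<in>UNIV. \<Sum>j\<in>UNIV. cmod (C $ i $ j))"
  have "0 \<le> S"
    unfolding S_def by (intro sum_nonneg norm_ge_zero)
  then have large: "cmod (complex_of_real (S + 1)) > S"
    by simp
  have "poly (det P) (complex_of_real (S + 1)) \<noteq> 0"
  proof
    assume "poly (det P) (complex_of_real (S + 1)) = 0"
    then obtain v where "v \<noteq> 0" "C *v v = complex_of_real (S + 1) *s v"
      using eigenvalue_iff by blast
    then have "cmod (complex_of_real (S + 1)) \<le> S"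
      unfolding S_def by (rule eigenvalue_norm_le_entry_sum)
    with large show False
      by simp
  qed
  then have "det P \<noteq> 0"
    by auto
  then show ?thesis
    unfolding eigenvalue_iff by (rule poly_roots_finite)
qed

lemma spectral_radius_ge_real_eigenvalue:
  fixes B :: "real ^ 'n ^ 'n"
  assumes "z \<noteq> 0" and "B *v z = c *\<^sub>R z"
  shows "\<bar>c\<bar> \<le> spectral_radius B"
proof -
  let ?C = "\<chi> i j. complex_of_real (B $ i $ j)" and ?w = "\<chi> i. complex_of_real (z $ i)"
  let ?E = "{cmod l | l. \<exists>v :: complex ^ 'n. v \<noteq> 0 \<and> ?C *v v = l *s v}"
  have "?w \<noteq> 0"
    using assms(1) by (auto simp: vec_eq_iff)
  moreover have "?C *v ?w = complex_of_real c *s ?w"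
    using arg_cong[OF assms(2), of "\<lambda>u. complex_of_real (u $ _)"]
    by (simp add: vec_eq_iff matrix_vector_mult_def)
  ultimately have "cmod (complex_of_real c) \<in> ?E"
    by blast
  moreover have "finite ?E"
    using finite_imageI[OF finite_eigenvalues[of ?C], of cmod] by (simp add: image_Collect)
  ultimately have "cmod (complex_of_real c) \<le> Max ?E"
    by (rule Max_ge[rotated])
  then show ?thesis
    by (simp add: spectral_radius_def)
qed

section \<open>A Collatz--Wielandt bound via Brouwer's fixed point theorem\<close>

lemma nonneg_matrix_mult_mono:
  assumes "nonneg_matrix B" and "x \<le> y"
  shows "B *v x \<le> B *v y"
  using assms unfolding nonneg_matrix_def less_eq_vec_def
  by (auto simp: matrix_vector_mult_def intro!: sum_mono mult_left_mono)

definition subinvariant_simplex :: "real ^ 'n ^ 'n \<Rightarrow> real \<Rightarrow> (real ^ 'n) set" where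
  "subinvariant_simplex B s = {z. 0 \<le> z \<and> (\<Sum>i\<in>UNIV. z $ i) = 1 \<and> s *\<^sub>R z \<le> B *v z}"

lemma compact_subinvariant_simplex:
  fixes B :: "real ^ 'n ^ 'n"
  shows "compact (subinvariant_simplex B s)"
proof (rule compact_eq_bounded_closed[THEN iffD2, OF conjI])
  have "subinvariant_simplex B s \<subseteq> cball 0 1"
  proof
    fix z assume z: "z \<in> subinvariant_simplex B s"
    then have "norm z \<le> (\<Sum>i\<in>UNIV. \<bar>z $ i\<bar>)"
      by (simp add: norm_le_l1_cart)
    also have "\<dots> = 1"
      using z by (simp add: subinvariant_simplex_def less_eq_vec_def)
    finally show "z \<in> cball 0 1"
      by simp
  qed
  then show "bounded (subinvariant_simplex B s)"
    using bounded_cball bounded_subset by blast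
  have "subinvariant_simplex B s = {z. 0 \<le> z} \<inter> {z. (\<Sum>i\<in>UNIV. z $ i) = 1}
      \<inter> {z. s *\<^sub>R z \<le> B *v z}"
    by (auto simp: subinvariant_simplex_def)
  moreover have "closed {z :: real ^ 'n. s *\<^sub>R z \<le> B *v z}"
    unfolding less_eq_vec_def
    by (intro closed_Collect_all closed_Collect_le continuous_intros continuous_on_component
        linear_continuous_on matrix_vector_mul_bounded_linear)
  moreover have "closed {z :: real ^ 'n. 0 \<le> z}"
    unfolding less_eq_vec_def by (intro closed_Collect_all closed_Collect_le continuous_intros)
  moreover have "closed {z :: real ^ 'n. (\<Sum>i\<in>UNIV. z $ i) = 1}"
    by (intro closed_Collect_eq continuous_intros)
  ultimately show "closed (subinvariant_simplex B s)"
    by (simp add: closed_Int)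
qed

lemma convex_subinvariant_simplex:
  fixes B :: "real ^ 'n ^ 'n"
  shows "convex (subinvariant_simplex B s)"
  unfolding convex_def
proof (intro ballI allI impI)
  fix x z :: "real ^ 'n" and u v :: real
  assume xz: "x \<in> subinvariant_simplex B s" "z \<in> subinvariant_simplex B s"
    and uv: "0 \<le> u" "0 \<le> v" "u + v = 1"
  then have "u *\<^sub>R (s *\<^sub>R x) + v *\<^sub>R (s *\<^sub>R z) \<le> u *\<^sub>R (B *v x) + v *\<^sub>R (B *v z)"
    by (intro add_mono scaleR_left_mono) (auto simp: subinvariant_simplex_def)
  then have "s *\<^sub>R (u *\<^sub>R x + v *\<^sub>R z) \<le> B *v (u *\<^sub>R x + v *\<^sub>R z)"
    by (simp add: matrix_vector_right_distrib matrix_vector_mult_scaleR scaleR_right_distrib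
        mult.commute)
  with xz uv show "u *\<^sub>R x + v *\<^sub>R z \<in> subinvariant_simplex B s"
    by (auto simp: subinvariant_simplex_def sum.distrib sum_distrib_left[symmetric] less_eq_vec_def)
qed

lemma sum_components_pos:
  fixes y :: "real ^ 'n"
  assumes "0 \<le> y" and "y \<noteq> 0"
  shows "0 < (\<Sum>i\<in>UNIV. y $ i)"
proof -
  obtain k where "y $ k \<noteq> 0"
    using assms(2) by (auto simp: vec_eq_iff)
  moreover have "0 \<le> y $ k"
    using assms(1) by (simp add: less_eq_vec_def)
  ultimately have "0 < y $ k"
    by simp
  also have "y $ k \<le> (\<Sum>i\<in>UNIV. y $ i)"
    using assms(1) by (intro member_le_sum) (auto simp: less_eq_vec_def)
  finally show ?thesis .
qed

lemma normalized_in_subinvariant_simplex: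
  fixes B :: "real ^ 'n ^ 'n"
  assumes "0 \<le> y" and "y \<noteq> 0" and "s *\<^sub>R y \<le> B *v y"
  shows "inverse (\<Sum>i\<in>UNIV. y $ i) *\<^sub>R y \<in> subinvariant_simplex B s"
proof -
  let ?c = "inverse (\<Sum>i\<in>UNIV. y $ i)"
  have "0 < ?c"
    using sum_components_pos[OF assms(1,2)] by simp
  then have mono: "?c *\<^sub>R (s *\<^sub>R y) \<le> ?c *\<^sub>R (B *v y)"
    by (intro scaleR_left_mono[OF assms(3)]) simp
  have nonneg: "0 \<le> ?c *\<^sub>R y"
    using \<open>0 < ?c\<close> assms(1) by (intro scaleR_nonneg_nonneg) simp_all
  have "(\<Sum>i\<in>UNIV. (?c *\<^sub>R y) $ i) = 1"
    using \<open>0 < ?c\<close> by (simp add: sum_distrib_left[symmetric])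
  with mono nonneg show ?thesis
    by (simp add: subinvariant_simplex_def matrix_vector_mult_scaleR mult.commute)
qed

lemma subinvariant_simplex_step:
  fixes B :: "real ^ 'n ^ 'n"
  assumes B: "nonneg_matrix B" and z: "z \<in> subinvariant_simplex B s"
  shows "0 \<le> B *v z + z" and "B *v z + z \<noteq> 0" and "s *\<^sub>R (B *v z + z) \<le> B *v (B *v z + z)"
proof -
  have z0: "0 \<le> z" and sz: "s *\<^sub>R z \<le> B *v z" and z1: "(\<Sum>i\<in>UNIV. z $ i) = 1"
    using z by (auto simp: subinvariant_simplex_def)
  show "0 \<le> B *v z + z"
    using nonneg_matrix_mult_mono[OF B z0] z0 by simp
  show "B *v z + z \<noteq> 0"
  proof
    assume "B *v z + z = 0"
    then have "z = 0"
      using nonneg_matrix_mult_mono[OF B z0] z0 by (metis add_nonneg_eq_0_iff matrix_vector_mult_0_right)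
    with z1 show False
      by simp
  qed
  have "s *\<^sub>R (B *v z) \<le> B *v (B *v z)"
    using nonneg_matrix_mult_mono[OF B sz] by (simp add: matrix_vector_mult_scaleR)
  with sz show "s *\<^sub>R (B *v z + z) \<le> B *v (B *v z + z)"
    by (simp add: matrix_vector_right_distrib scaleR_right_distrib add_mono)
qed

lemma subinvariant_simplex_fixed_point:
  fixes B :: "real ^ 'n ^ 'n"
  assumes B: "nonneg_matrix B" and "subinvariant_simplex B s \<noteq> {}"
  obtains z where "z \<in> subinvariant_simplex B s"
    and "B *v z + z = (\<Sum>i\<in>UNIV. (B *v z + z) $ i) *\<^sub>R z"
proof -
  let ?K = "subinvariant_simplex B s"
  \<comment> \<open>adding the identity keeps the normalising sum positive on the whole simplex\<close>
  define f where "f z = inverse (\<Sum>i\<in>UNIV. (B *v z + z) $ i) *\<^sub>R (B *v z + z)" for z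
  have pos: "0 < (\<Sum>i\<in>UNIV. (B *v z + z) $ i)" if "z \<in> ?K" for z
    using sum_components_pos[OF subinvariant_simplex_step(1,2)[OF B that]] .
  have "continuous_on ?K f"
  proof -
    have "continuous_on ?K (\<lambda>z. B *v z + z)"
      by (intro continuous_intros linear_continuous_on matrix_vector_mul_bounded_linear)
    moreover have "\<forall>z\<in>?K. (\<Sum>i\<in>UNIV. (B *v z + z) $ i) \<noteq> 0"
      using pos by (metis less_irrefl)
    ultimately show ?thesis
      unfolding f_def
      by (intro continuous_on_scaleR continuous_on_inverse continuous_on_sum continuous_on_component)
  qed
  moreover have "f \<in> ?K \<rightarrow> ?K"
    unfolding f_def
    using normalized_in_subinvariant_simplex[OF subinvariant_simplex_step[OF B]] by blast
  ultimately obtain z where z: "z \<in> ?K" and "f z = z"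
    using brouwer[OF compact_subinvariant_simplex convex_subinvariant_simplex \<open>?K \<noteq> {}\<close>] by blast
  have "B *v z + z = (\<Sum>i\<in>UNIV. (B *v z + z) $ i) *\<^sub>R f z"
    using pos[OF z] by (simp add: f_def)
  with \<open>f z = z\<close> z show ?thesis
    by (intro that) simp_all
qed

lemma nonneg_matrix_subinvariant_eigenvector:
  fixes B :: "real ^ 'n ^ 'n"
  assumes B: "nonneg_matrix B" and "0 \<le> y" and "y \<noteq> 0" and "s *\<^sub>R y \<le> B *v y"
  obtains z c where "0 \<le> z" and "z \<noteq> 0" and "B *v z = c *\<^sub>R z" and "s \<le> c"
proof -
  obtain z where z: "z \<in> subinvariant_simplex B s"
    and fixed: "B *v z + z = (\<Sum>i\<in>UNIV. (B *v z + z) $ i) *\<^sub>R z"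
    using subinvariant_simplex_fixed_point[OF B] normalized_in_subinvariant_simplex[OF assms(2-4)] by blast
  define c where "c = (\<Sum>i\<in>UNIV. (B *v z + z) $ i) - 1"
  have "B *v z + z = (c + 1) *\<^sub>R z"
    using fixed unfolding c_def by (metis diff_add_cancel)
  then have eig: "B *v z = c *\<^sub>R z"
    by (simp add: scaleR_left_distrib)
  have "0 \<le> z" and "z \<noteq> 0" and sz: "s *\<^sub>R z \<le> B *v z"
    using z by (auto simp: subinvariant_simplex_def)
  obtain k where "z $ k \<noteq> 0"
    using \<open>z \<noteq> 0\<close> by (auto simp: vec_eq_iff)
  moreover have "0 \<le> z $ k"
    using \<open>0 \<le> z\<close> by (simp add: less_eq_vec_def)
  moreover have "s * z $ k \<le> c * z $ k"
    using sz unfolding eig less_eq_vec_def by simp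
  ultimately have "s \<le> c"
    by (simp add: mult_le_cancel_right)
  with \<open>0 \<le> z\<close> \<open>z \<noteq> 0\<close> eig show ?thesis
    by (intro that)
qed

lemma spectral_radius_ge_subinvariant:
  fixes B :: "real ^ 'n ^ 'n"
  assumes "nonneg_matrix B" and "0 \<le> y" and "y \<noteq> 0" and "s *\<^sub>R y \<le> B *v y"
  shows "s \<le> spectral_radius B"
proof -
  obtain z c where "z \<noteq> 0" and "B *v z = c *\<^sub>R z" and "s \<le> c"
    using nonneg_matrix_subinvariant_eigenvector[OF assms] .
  then show ?thesis
    using spectral_radius_ge_real_eigenvalue by fastforce
qed

section \<open>Sign properties of M-matrices\<close>

definition neg_part :: "real ^ 'n \<Rightarrow> real ^ 'n" where
  "neg_part z = (\<chi> i. max (- z $ i) 0)"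

lemma neg_part_nonneg: "0 \<le> neg_part z"
  by (simp add: neg_part_def less_eq_vec_def)

lemma neg_part_eq_0_iff: "neg_part z = 0 \<longleftrightarrow> 0 \<le> z"
  by (auto simp: neg_part_def less_eq_vec_def vec_eq_iff max_def)

lemma neg_part_subinvariant:
  fixes B :: "real ^ 'n ^ 'n"
  assumes B: "nonneg_matrix B" and sign: "\<And>i. z $ i < 0 \<Longrightarrow> 0 \<le> ((s *\<^sub>R mat 1 - B) *v z) $ i"
  shows "s *\<^sub>R neg_part z \<le> B *v neg_part z"
  unfolding less_eq_vec_def
proof
  fix i
  have By: "0 \<le> (B *v neg_part z) $ i"
    using nonneg_matrix_mult_mono[OF B neg_part_nonneg] by (simp add: less_eq_vec_def)
  show "(s *\<^sub>R neg_part z) $ i \<le> (B *v neg_part z) $ i"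
  proof (cases "z $ i < 0")
    case True
    have "- neg_part z \<le> z"
      by (simp add: neg_part_def less_eq_vec_def max_def)
    then have "B *v (- neg_part z) \<le> B *v z"
      by (rule nonneg_matrix_mult_mono[OF B])
    then have "- (B *v neg_part z) $ i \<le> (B *v z) $ i"
      by (simp add: less_eq_vec_def linear_neg[OF matrix_vector_mul_linear])
    moreover have "0 \<le> s * z $ i - (B *v z) $ i"
      using sign[OF True] by (simp add: matrix_vector_mult_diff_rdistrib scaleR_matrix_vector_assoc[symmetric])
    ultimately show ?thesis
      using True by (simp add: neg_part_def)
  next
    case False
    with By show ?thesis
      by (simp add: neg_part_def)
  qed
qed

lemma nonsingular_M_matrix_sign_nonneg:
  fixes M :: "real ^ 'n ^ 'n"
  assumes "nonsingular_M_matrix M" and sign: "\<And>i. z $ i < 0 \<Longrightarrow> 0 \<le> (M *v z) $ i"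
  shows "0 \<le> z"
proof -
  obtain s B where B: "nonneg_matrix B" and M: "M = s *\<^sub>R mat 1 - B" and "s > spectral_radius B"
    using assms(1) unfolding nonsingular_M_matrix_def by blast
  have "s *\<^sub>R neg_part z \<le> B *v neg_part z"
    using neg_part_subinvariant[OF B] sign unfolding M by blast
  then have "neg_part z = 0"
    using spectral_radius_ge_subinvariant[OF B neg_part_nonneg] \<open>s > spectral_radius B\<close> by fastforce
  then show ?thesis
    by (simp add: neg_part_eq_0_iff)
qed

lemma irreducible_nonneg_eigenvector_pos:
  fixes B :: "real ^ 'n ^ 'n"
  assumes B: "nonneg_matrix B" and irr: "irreducible_mat (s *\<^sub>R mat 1 - B)"
    and "0 \<le> y" and "y \<noteq> 0" and eig: "B *v y = s *\<^sub>R y"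
  shows "0 < y $ i"
proof (rule ccontr)
  assume "\<not> 0 < y $ i"
  let ?I = "{l. 0 < y $ l}" and ?J = "{l. y $ l = 0}"
  have "?I \<noteq> {}"
    using \<open>0 \<le> y\<close> \<open>y \<noteq> 0\<close> by (auto simp: vec_eq_iff less_eq_vec_def order_le_less)
  moreover have "?J \<noteq> {}" and "?I \<union> ?J = UNIV"
    using \<open>0 \<le> y\<close> \<open>\<not> 0 < y $ i\<close> by (auto simp: less_eq_vec_def order_le_less)
  moreover have "(s *\<^sub>R mat 1 - B) $ j $ l = 0" if "j \<in> ?J" and "l \<in> ?I" for j l
  proof -
    have "(\<Sum>m\<in>UNIV. B $ j $ m * y $ m) = 0"
      using arg_cong[OF eig, of "\<lambda>u. u $ j"] that(1) by (simp add: matrix_vector_mult_def)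
    moreover have "\<forall>m\<in>UNIV. 0 \<le> B $ j $ m * y $ m"
      using B \<open>0 \<le> y\<close> by (simp add: nonneg_matrix_def less_eq_vec_def)
    ultimately have "B $ j $ l * y $ l = 0"
      using sum_nonneg_eq_0_iff[of UNIV "\<lambda>m. B $ j $ m * y $ m"] by simp
    moreover have "j \<noteq> l"
      using that by auto
    ultimately show ?thesis
      using that(2) by (simp add: mat_def)
  qed
  ultimately have "reducible (s *\<^sub>R mat 1 - B)"
    unfolding reducible_def by (intro exI[of _ ?I] exI[of _ ?J]) auto
  with irr show False
    by (simp add: irreducible_mat_def)
qed

lemma subinvariant_eq_of_pos_left_eigenvector:
  fixes B :: "real ^ 'n ^ 'n"
  assumes v: "\<And>i. 0 < v $ i" and left: "transpose B *v v = s *\<^sub>R v" and sub: "s *\<^sub>R y \<le> B *v y"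
  shows "B *v y = s *\<^sub>R y"
proof -
  let ?e = "B *v y - s *\<^sub>R y"
  have "v \<bullet> ?e = (v v* B) \<bullet> y - s * (v \<bullet> y)"
    by (simp add: dot_lmul_matrix inner_diff_right)
  also have "\<dots> = 0"
    using left by (simp add: transpose_matrix_vector)
  finally have "(\<Sum>i\<in>UNIV. v $ i * ?e $ i) = 0"
    by (simp add: inner_vec_def)
  moreover have "\<forall>i\<in>UNIV. 0 \<le> v $ i * ?e $ i"
    using sub v by (simp add: less_eq_vec_def less_imp_le)
  ultimately have "v $ i * ?e $ i = 0" for i
    using sum_nonneg_eq_0_iff[of UNIV "\<lambda>i. v $ i * ?e $ i"] by simp
  then have "?e = 0"
    using v by (simp add: vec_eq_iff) (metis less_irrefl)
  then show ?thesis
    by simp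
qed

lemma irreducible_singular_M_matrix_sign:
  fixes M :: "real ^ 'n ^ 'n"
  assumes irr: "irreducible_mat M" and sing: "singular_M_matrix M"
    and v: "\<And>i. 0 < v $ i" and left: "transpose M *v v = 0"
    and sign: "\<And>i. z $ i < 0 \<Longrightarrow> 0 \<le> (M *v z) $ i" and "z $ j < 0"
  shows "z $ i < 0" and "M *v z = 0"
proof -
  obtain s B where B: "nonneg_matrix B" and M: "M = s *\<^sub>R mat 1 - B"
    using sing unfolding singular_M_matrix_def by blast
  have "transpose M = s *\<^sub>R mat 1 - transpose B"
    unfolding M by (simp add: transpose_def mat_def vec_eq_iff)
  with left have "s *\<^sub>R v - transpose B *v v = 0"
    by (simp add: matrix_vector_mult_diff_rdistrib scaleR_matrix_vector_assoc[symmetric])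
  then have "transpose B *v v = s *\<^sub>R v"
    by simp
  moreover have sub: "s *\<^sub>R neg_part z \<le> B *v neg_part z"
    using neg_part_subinvariant[OF B] sign unfolding M by blast
  ultimately have eig: "B *v neg_part z = s *\<^sub>R neg_part z"
    by (rule subinvariant_eq_of_pos_left_eigenvector[OF v])
  have "neg_part z \<noteq> 0"
    using \<open>z $ j < 0\<close> by (simp add: neg_part_eq_0_iff less_eq_vec_def not_le) blast
  then have pos: "0 < neg_part z $ l" for l
    using irreducible_nonneg_eigenvector_pos[OF B _ neg_part_nonneg _ eig] irr unfolding M by blast
  have neg: "z $ l < 0" for l
    using pos[of l] by (simp add: neg_part_def max_def split: if_splits)
  then show "z $ i < 0" .
  have "z = - neg_part z"
    using neg by (simp add: vec_eq_iff neg_part_def)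
  moreover have "M *v neg_part z = 0"
    unfolding M using eig by (simp add: matrix_vector_mult_diff_rdistrib scaleR_matrix_vector_assoc[symmetric])
  ultimately show "M *v z = 0"
    by (metis linear_neg[OF matrix_vector_mul_linear] neg_equal_0_iff_equal)
qed

section \<open>The generalized Newton iteration\<close>

lemma Dmat_mult_component: "(Dmat w *v z) $ i = sgn (w $ i) * z $ i"
proof -
  have "(Dmat w *v z) $ i = (\<Sum>j\<in>UNIV. (if i = j then sgn (w $ i) else 0) * z $ j)"
    by (simp add: matrix_vector_mult_def Dmat_def vsign_def cong: if_cong)
  also have "\<dots> = sgn (w $ i) * z $ i"
    by (simp add: if_distrib[of "\<lambda>a. a * _"] cong: if_cong)
  finally show ?thesis .
qed

lemma Dmat_eq_mat_1_iff: "Dmat x = mat 1 \<longleftrightarrow> (\<forall>k. 0 < x $ k)"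
  by (auto simp: vec_eq_iff Dmat_def vsign_def mat_def sgn_if split: if_splits)

lemma vabs_eq_Dmat_mult: "vabs x = Dmat x *v x"
  by (simp add: vec_eq_iff Dmat_mult_component vabs_def abs_sgn)

lemma Dmat_mult_le_vabs: "Dmat w *v y \<le> vabs y"
  by (simp add: less_eq_vec_def Dmat_mult_component vabs_def sgn_if abs_ge_self abs_ge_minus_self)

lemma A_minus_Dmat_self: "(A - Dmat x) *v x = A *v x - vabs x"
  by (simp add: matrix_vector_mult_diff_rdistrib vabs_eq_Dmat_mult)

lemma A_minus_Dmat_mult_component:
  fixes A :: "real ^ 'n ^ 'n"
  shows "((A - Dmat w) *v z) $ i = ((A - mat 1) *v z) $ i + (1 - sgn (w $ i)) * z $ i"
  by (simp add: matrix_vector_mult_diff_rdistrib Dmat_mult_component algebra_simps)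

lemma A_minus_Dmat_sign_condition:
  fixes A :: "real ^ 'n ^ 'n"
  assumes "0 \<le> (A - Dmat w) *v z" and "z $ i < 0"
  shows "0 \<le> ((A - mat 1) *v z) $ i"
proof -
  have "0 \<le> 1 - sgn (w $ i)"
    by (simp add: sgn_if)
  then have "(1 - sgn (w $ i)) * z $ i \<le> 0"
    using assms(2) by (simp add: mult_nonneg_nonpos)
  moreover have "0 \<le> ((A - Dmat w) *v z) $ i"
    using assms(1) by (simp add: less_eq_vec_def)
  ultimately show ?thesis
    unfolding A_minus_Dmat_mult_component by linarith
qed

definition monotone_mat :: "real ^ 'n ^ 'n \<Rightarrow> bool" where
  "monotone_mat G \<longleftrightarrow> (\<forall>z. 0 \<le> G *v z \<longrightarrow> 0 \<le> z)"

lemma monotone_mat_invertible: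
  assumes "monotone_mat G"
  shows "invertible G"
  unfolding invertible_left_inverse matrix_left_invertible_ker
proof (intro allI impI)
  fix z assume "G *v z = 0"
  then have "G *v (- z) = 0"
    by (simp add: linear_neg[OF matrix_vector_mul_linear])
  with \<open>G *v z = 0\<close> have "0 \<le> z" and "0 \<le> - z"
    using assms unfolding monotone_mat_def by (metis order_refl)+
  then show "z = 0"
    by (simp add: order_antisym)
qed

lemma invertible_mult_matrix_inv:
  assumes "invertible G"
  shows "G *v (matrix_inv G *v b) = b"
proof -
  have "G ** matrix_inv G = mat 1"
    using assms unfolding invertible_def matrix_inv_def by (rule someI2_ex) blast
  then show ?thesis
    by (simp add: matrix_vector_mul_assoc)
qed

lemma monotone_A_minus_Dmat_nonsingular:
  fixes A :: "real ^ 'n ^ 'n"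
  assumes "nonsingular_M_matrix (A - mat 1)"
  shows "monotone_mat (A - Dmat w)"
  unfolding monotone_mat_def
  using nonsingular_M_matrix_sign_nonneg[OF assms] A_minus_Dmat_sign_condition by blast

lemma monotone_A_minus_Dmat_irreducible_singular:
  fixes A :: "real ^ 'n ^ 'n"
  assumes irr: "irreducible_mat (A - mat 1)" and sing: "singular_M_matrix (A - mat 1)"
    and v: "\<And>i. 0 < v $ i" and left: "transpose (A - mat 1) *v v = 0" and "w $ k \<le> 0"
  shows "monotone_mat (A - Dmat w)"
  unfolding monotone_mat_def
proof (intro allI impI)
  fix z assume G: "0 \<le> (A - Dmat w) *v z"
  show "0 \<le> z"
  proof (rule ccontr)
    assume "\<not> 0 \<le> z"
    then obtain j where "z $ j < 0"
      by (auto simp: less_eq_vec_def not_le)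
    then have zk: "z $ k < 0" and "((A - mat 1) *v z) $ k = 0"
      using irreducible_singular_M_matrix_sign[OF irr sing v left A_minus_Dmat_sign_condition[OF G]]
      by auto
    moreover have "(1 - sgn (w $ k)) * z $ k < 0"
      using \<open>w $ k \<le> 0\<close> zk by (intro mult_pos_neg) (auto simp: sgn_if)
    ultimately have "((A - Dmat w) *v z) $ k < 0"
      unfolding A_minus_Dmat_mult_component by simp
    with G show False
      by (simp add: less_eq_vec_def not_le[symmetric])
  qed
qed

lemma A_minus_Dmat_solution_has_negative_component:
  fixes A :: "real ^ 'n ^ 'n"
  assumes v: "\<And>i. 0 < v $ i" and left: "transpose (A - mat 1) *v v = 0" and "v \<bullet> b < 0"
    and sol: "(A - Dmat w) *v x = b"
  shows "\<exists>k. x $ k < 0"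
proof (rule ccontr)
  assume "\<not> (\<exists>k. x $ k < 0)"
  then have x: "0 \<le> x $ i" for i
    by (simp add: not_less)
  have "v \<bullet> ((A - mat 1) *v x) = 0"
    using left by (simp add: dot_lmul_matrix[symmetric])
  then have "v \<bullet> b = (\<Sum>i\<in>UNIV. v $ i * ((1 - sgn (w $ i)) * x $ i))"
    unfolding sol[symmetric] by (simp add: inner_vec_def A_minus_Dmat_mult_component
        distrib_left sum.distrib)
  also have "\<dots> \<ge> 0"
    using v x by (intro sum_nonneg mult_nonneg_nonneg) (auto simp: less_imp_le sgn_if)
  finally show False
    using \<open>v \<bullet> b < 0\<close> by simp
qed

lemma A_minus_Dmat_solution_residual_le:
  assumes "(A - Dmat w) *v x = b"
  shows "A *v x - vabs x \<le> b"
proof -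
  have "A *v x - vabs x \<le> A *v x - Dmat w *v x"
    by (rule diff_left_mono[OF Dmat_mult_le_vabs])
  also have "\<dots> = b"
    using assms by (simp add: matrix_vector_mult_diff_rdistrib)
  finally show ?thesis .
qed

lemma ave_solution_unique:
  fixes A :: "real ^ 'n ^ 'n"
  assumes mono: "\<And>x. A *v x - vabs x = b \<Longrightarrow> monotone_mat (A - Dmat x)"
    and x: "A *v x - vabs x = b" and y: "A *v y - vabs y = b"
  shows "x = y"
proof -
  have le: "x \<le> y" if x: "A *v x - vabs x = b" and y: "A *v y - vabs y = b" for x y
  proof -
    have "(A - Dmat x) *v (y - x) = (A - Dmat x) *v y - (A - Dmat x) *v x"
      by (rule matrix_vector_mult_diff_distrib)
    also have "\<dots> = (A *v y - vabs y) + (vabs y - Dmat x *v y) - (A *v x - vabs x)"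
      unfolding A_minus_Dmat_self by (simp add: matrix_vector_mult_diff_rdistrib)
    also have "\<dots> = vabs y - Dmat x *v y"
      unfolding x y by simp
    finally have "(A - Dmat x) *v (y - x) = vabs y - Dmat x *v y" .
    then have "0 \<le> (A - Dmat x) *v (y - x)"
      using Dmat_mult_le_vabs by simp
    with mono[OF x] have "0 \<le> y - x"
      unfolding monotone_mat_def by blast
    then show ?thesis
      by simp
  qed
  from le[OF x y] le[OF y x] show ?thesis
    by (rule order_antisym)
qed

lemma gn_step_increasing:
  fixes A :: "real ^ 'n ^ 'n"
  assumes "(A - Dmat w) *v x = b" and "(A - Dmat x) *v x' = b" and "monotone_mat (A - Dmat x)"
  shows "x \<le> x'"
proof -
  have "(A - Dmat x) *v (x' - x) = b - (A *v x - vabs x)"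
    using assms(2) by (simp add: matrix_vector_mult_diff_distrib A_minus_Dmat_self)
  also have "\<dots> \<ge> 0"
    using A_minus_Dmat_solution_residual_le[OF assms(1)] by simp
  finally have "0 \<le> x' - x"
    using assms(3) unfolding monotone_mat_def by blast
  then show ?thesis
    by simp
qed

lemma sgn_mult_ne_abs:
  fixes u u' :: real
  assumes "u \<le> u'" and "sgn u * u' \<noteq> \<bar>u'\<bar>"
  shows "u \<le> 0" and "0 < u'"
  using assms by (auto simp: sgn_if split: if_splits)

lemma gn_step_support_grows:
  fixes A :: "real ^ 'n ^ 'n"
  assumes "x \<le> x'" and "(A - Dmat x) *v x' = b" and "A *v x' - vabs x' \<noteq> b"
  shows "{i. 0 < x $ i} \<subset> {i. 0 < x' $ i}"
proof -
  have "{i. 0 < x $ i} \<subseteq> {i. 0 < x' $ i}"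
    using assms(1) by (auto simp: less_eq_vec_def intro: less_le_trans)
  moreover obtain i where "(A *v x') $ i - \<bar>x' $ i\<bar> \<noteq> b $ i"
    using assms(3) by (auto simp: vec_eq_iff vabs_def)
  moreover have "(A *v x') $ i - sgn (x $ i) * x' $ i = b $ i"
    using arg_cong[OF assms(2), of "\<lambda>u. u $ i"]
    by (simp add: matrix_vector_mult_diff_rdistrib Dmat_mult_component)
  ultimately have "x $ i \<le> x' $ i" and "sgn (x $ i) * x' $ i \<noteq> \<bar>x' $ i\<bar>"
    using assms(1) by (auto simp: less_eq_vec_def)
  then have "x $ i \<le> 0" and "0 < x' $ i"
    using sgn_mult_ne_abs by blast+
  with \<open>{i. 0 < x $ i} \<subseteq> {i. 0 < x' $ i}\<close> show ?thesis
    by (metis mem_Collect_eq not_le psubsetI)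
qed

lemma gn_step_stationary:
  fixes A :: "real ^ 'n ^ 'n"
  assumes "(A - Dmat x) *v x' = b" and "A *v x - vabs x = b" and "invertible (A - Dmat x)"
  shows "x' = x"
proof -
  have "(A - Dmat x) *v x' = (A - Dmat x) *v x"
    using assms(1,2) by (simp add: A_minus_Dmat_self)
  then show ?thesis
    using inj_matrix_vector_mult[OF assms(3)] by (simp add: inj_eq)
qed

lemma gn_sequence_terminates:
  fixes A :: "real ^ 'n ^ 'n" and x :: "nat \<Rightarrow> real ^ 'n"
  assumes step: "\<And>k. (A - Dmat (x k)) *v x (Suc k) = b"
    and mono: "\<And>k. monotone_mat (A - Dmat (x k))"
    and card: "card {i. 0 < x (c + 2) $ i} \<le> c"
  shows "A *v x (c + 2) - vabs (x (c + 2)) = b" and "c + 2 \<le> k \<Longrightarrow> x k = x (c + 2)"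
proof -
  let ?solves = "\<lambda>y. A *v y - vabs y = b"
  have stay: "x (Suc k) = x k" if "?solves (x k)" for k
    using gn_step_stationary[OF step that monotone_mat_invertible[OF mono]] .
  have support: "m \<le> card {i. 0 < x (Suc m) $ i}" if "\<not> ?solves (x (Suc m))" for m
    using that
  proof (induction m)
    case (Suc m)
    then have "\<not> ?solves (x (Suc m))"
      using stay by metis
    with Suc.IH have "m \<le> card {i. 0 < x (Suc m) $ i}" .
    also have "\<dots> < card {i. 0 < x (Suc (Suc m)) $ i}"
      using gn_step_support_grows[OF gn_step_increasing[OF step step mono] step Suc.prems]
      by (intro psubset_card_mono) auto
    finally show ?case
      by simp
  qed simp
  show solved: "?solves (x (c + 2))"
    using support[of "Suc c"] card by fastforce
  show "x k = x (c + 2)" if "c + 2 \<le> k"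
    using that
  proof (induction k rule: dec_induct)
    case (step k)
    then show ?case
      using stay solved by metis
  qed simp
qed

definition gn_terminates_by :: "real ^ 'n ^ 'n \<Rightarrow> real ^ 'n \<Rightarrow> real ^ 'n \<Rightarrow> nat \<Rightarrow> bool" where
  "gn_terminates_by A b x0 N \<longleftrightarrow>
     (\<forall>k. invertible (A - Dmat (gn_iter A b x0 k))) \<and>
     (\<exists>!xs. A *v xs - vabs xs = b) \<and>
     (\<exists>xs. A *v xs - vabs xs = b \<and> (\<forall>k\<ge>N. gn_iter A b x0 k = xs))"

lemma gn_iter_terminates:
  fixes A :: "real ^ 'n ^ 'n"
  assumes mono: "\<And>w. w \<in> W \<Longrightarrow> monotone_mat (A - Dmat w)"
    and solution_in: "\<And>w x. (A - Dmat w) *v x = b \<Longrightarrow> x \<in> W"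
    and "x0 \<in> W" and card: "\<And>w. w \<in> W \<Longrightarrow> card {i. 0 < w $ i} \<le> c"
  shows "gn_terminates_by A b x0 (c + 2)"
proof -
  let ?x = "gn_iter A b x0"
  have step: "(A - Dmat (?x k)) *v ?x (Suc k) = b" if "?x k \<in> W" for k
    using invertible_mult_matrix_inv[OF monotone_mat_invertible[OF mono[OF that]]] by simp
  have in_W: "?x k \<in> W" for k
    by (induction k) (use \<open>x0 \<in> W\<close> step solution_in in auto)
  note terminates = gn_sequence_terminates[where x = ?x, OF step[OF in_W] mono[OF in_W] card[OF in_W]]
  have "\<exists>!xs. A *v xs - vabs xs = b"
  proof (rule ex_ex1I)
    show "\<exists>xs. A *v xs - vabs xs = b"
      using terminates(1) by blast
    have "monotone_mat (A - Dmat y)" if "A *v y - vabs y = b" for y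
      using mono[OF solution_in[of y y]] that by (simp add: A_minus_Dmat_self)
    then show "y = z" if "A *v y - vabs y = b" and "A *v z - vabs z = b" for y z
      using ave_solution_unique that by blast
  qed
  moreover have "invertible (A - Dmat (?x k))" for k
    using monotone_mat_invertible[OF mono[OF in_W]] .
  ultimately show ?thesis
    unfolding gn_terminates_by_def using terminates by blast
qed

lemma gn_terminates_nonsingular:
  fixes A :: "real ^ 'n ^ 'n"
  assumes "nonsingular_M_matrix (A - mat 1)"
  shows "gn_terminates_by A b x0 (CARD('n) + 2)"
  by (intro gn_iter_terminates[where W = UNIV] monotone_A_minus_Dmat_nonsingular[OF assms])
    (auto intro: card_mono)

lemma gn_terminates_irreducible_singular:
  fixes A :: "real ^ 'n ^ 'n"
  assumes irr: "irreducible_mat (A - mat 1)" and sing: "singular_M_matrix (A - mat 1)"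
    and v: "\<And>i. 0 < v $ i" and left: "transpose (A - mat 1) *v v = 0" and "v \<bullet> b < 0"
    and "x0 $ k \<le> 0"
  shows "gn_terminates_by A b x0 (CARD('n) + 1)"
proof -
  let ?W = "{w. \<exists>k. w $ k \<le> 0}"
  have "gn_terminates_by A b x0 (CARD('n) - 1 + 2)"
  proof (rule gn_iter_terminates[where W = ?W])
    show "monotone_mat (A - Dmat w)" if "w \<in> ?W" for w
      using that monotone_A_minus_Dmat_irreducible_singular[OF irr sing v left] by blast
    show "x \<in> ?W" if "(A - Dmat w) *v x = b" for w x
      using A_minus_Dmat_solution_has_negative_component[OF v left \<open>v \<bullet> b < 0\<close> that]
      by (auto intro: less_imp_le)
    show "x0 \<in> ?W"
      using \<open>x0 $ k \<le> 0\<close> by blast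
    show "card {i. 0 < w $ i} \<le> CARD('n) - 1" if w: "w \<in> ?W" for w :: "real ^ 'n"
    proof -
      obtain k where "w $ k \<le> 0"
        using w by blast
      then have "{i. 0 < w $ i} \<subseteq> UNIV - {k}"
        by (auto simp: not_le[symmetric])
      then have "card {i. 0 < w $ i} \<le> card (UNIV - {k})"
        by (rule card_mono[rotated]) simp
      then show ?thesis
        by (simp add: card_Diff_singleton)
    qed
  qed
  moreover have "CARD('n) - 1 + 2 = CARD('n) + 1"
    using card_ge_0_finite[of "UNIV :: 'n set"] by simp
  ultimately show ?thesis
    by simp
qed

theorem theorem4p2:
  fixes A :: "real ^ 'n ^ 'n" and b :: "real ^ 'n"
  shows
   "(nonsingular_M_matrix (A - mat 1) \<longrightarrow>
      (\<forall>x0. (\<forall>k. invertible (A - Dmat (gn_iter A b x0 k))) \<and>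
            (\<exists>!xs. A *v xs - vabs xs = b) \<and>
            (\<exists>xs. A *v xs - vabs xs = b \<and>
                  (\<forall>k\<ge>CARD('n) + 2. gn_iter A b x0 k = xs))))
    \<and>
    (\<forall>v. irreducible_mat (A - mat 1) \<and> singular_M_matrix (A - mat 1) \<and>
         (\<forall>i. v $ i > 0) \<and> (transpose A - mat 1) *v v = 0 \<and> v \<bullet> b < 0 \<longrightarrow>
      (\<forall>x0. Dmat x0 \<noteq> mat 1 \<longrightarrow>
            (\<forall>k. invertible (A - Dmat (gn_iter A b x0 k))) \<and>
            (\<exists>!xs. A *v xs - vabs xs = b) \<and>
            (\<exists>xs. A *v xs - vabs xs = b \<and>
                  (\<forall>k\<ge>CARD('n) + 1. gn_iter A b x0 k = xs))))"
proof -
  have "transpose (A - mat 1) = transpose A - mat 1"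
    by (auto simp: transpose_def mat_def vec_eq_iff)
  moreover have "\<exists>k. x0 $ k \<le> 0" if "Dmat x0 \<noteq> mat 1" for x0 :: "real ^ 'n"
    using that by (auto simp: Dmat_eq_mat_1_iff not_less)
  ultimately show ?thesis
    unfolding gn_terminates_by_def[symmetric]
    using gn_terminates_nonsingular gn_terminates_irreducible_singular by metis
qed

end
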